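(* There is a universal constant $C<\infty$ such that for every power of two $L\ge2$, every $l\in\{1,2,4,\dots,\frac L2\}$ and every $\hat D\ge C$, $$\ln\#\Big\{\bar h\ :\ \max_{\rho}\Big(\frac{l}{\rho}\Big)^2\frac{D(\bar h_\rho)}{L}<\hat D\Big\}\le C\,\frac{L}{l}\,\ln\hat D,$$ where $\bar h$ ranges over functions $\bar h:\{0,2l,4l,\dots,L\}\to2l\mathbb Z$ with $\bar h(0)=\bar h(L)=0$, and $\rho$ ranges over the dyadic scales $\{2l,4l,\dots,\frac L2\}$ (a maximum over the empty set being $0$).
   Context: Each such $\bar h$ is identified with the function on $\{0,\dots,L\}$ that agrees with $\bar h$ on $2l\mathbb Z\cap[0,L]$ and is affine in between. For a function $h$ on $\{0,\dots,L\}$ and dyadic $\rho\in\{1,\dots,L\}$, $h_{\ge\rho}$ is the function on $\{0,\dots,L\}$ agreeing with $h$ on $\rho\mathbb Z\cap[0,L]$ and affine between consecutive points of $\rho\mathbb Z\cap[0,L]$; for $\rho\le L/2$, $h_\rho:=h_{\ge\rho}-h_{\ge2\rho}$. $D(h)=\frac12\sum_{x=1}^L(h(x)-h(x-1))^2$. *)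

theory Defs
  imports Complex_Main
begin

definition interp :: "nat \<Rightarrow> (nat \<Rightarrow> real) \<Rightarrow> nat \<Rightarrow> real" where
  "interp \<rho> h x =
     h ((x div \<rho>) * \<rho>)
     + (real (x mod \<rho>) / real \<rho>) * (h ((x div \<rho>) * \<rho> + \<rho>) - h ((x div \<rho>) * \<rho>))"

definition hge :: "nat \<Rightarrow> (nat \<Rightarrow> real) \<Rightarrow> nat \<Rightarrow> real" where
  "hge \<rho> h = interp \<rho> h"

definition hscale :: "nat \<Rightarrow> (nat \<Rightarrow> real) \<Rightarrow> nat \<Rightarrow> real" where
  "hscale \<rho> h = (\<lambda>x. hge \<rho> h x - hge (2 * \<rho>) h x)"

definition Dir :: "nat \<Rightarrow> (nat \<Rightarrow> real) \<Rightarrow> real" where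
  "Dir L h = (1/2) * (\<Sum>x = 1..L. (h x - h (x - 1))^2)"

definition scales :: "nat \<Rightarrow> nat \<Rightarrow> nat set" where
  "scales L l = {\<rho>. (\<exists>k. \<rho> = 2 ^ k) \<and> 2 * l \<le> \<rho> \<and> 2 * \<rho> \<le> L}"

text \<open>Coarse-grained height functions hbar : {0,2l,...,L} -> 2lZ with hbar 0 = hbar L = 0,
  encoded as functions nat => int vanishing off the grid.\<close>
definition coarse_fns :: "nat \<Rightarrow> nat \<Rightarrow> (nat \<Rightarrow> int) set" where
  "coarse_fns L l = {hb. (\<forall>x. \<not> (2 * l dvd x \<and> x \<le> L) \<longrightarrow> hb x = 0)
                       \<and> (\<forall>x. int (2 * l) dvd hb x) \<and> hb 0 = 0 \<and> hb L = 0}"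

definition ext :: "nat \<Rightarrow> (nat \<Rightarrow> int) \<Rightarrow> nat \<Rightarrow> real" where
  "ext l hb = interp (2 * l) (\<lambda>x. real_of_int (hb x))"

definition maxq :: "nat \<Rightarrow> nat \<Rightarrow> (nat \<Rightarrow> int) \<Rightarrow> real" where
  "maxq L l hb =
    (if scales L l = {} then 0
     else Max ((\<lambda>\<rho>. (real l / real \<rho>)^2 * Dir L (hscale \<rho> (ext l hb)) / real L) ` scales L l))"

end

theory Submission
  imports Defs "HOL-Library.FuncSet" "HOL-Analysis.Convex"
begin

text \<open>A coarse-grained height function is rebuilt scale by scale, from the grid \<open>L\<bbbZ>\<close> down
  to \<open>2l\<bbbZ>\<close>: passing from \<open>2r\<bbbZ>\<close> to \<open>r\<bbbZ>\<close> needs exactly its second differences at the odd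
  multiples of \<open>r\<close>, which are multiples of \<open>2l\<close>. Since \<open>h\<^sub>r\<close> vanishes on \<open>2r\<bbbZ>\<close> and is half
  the second difference at the odd multiples of \<open>r\<close>, Cauchy-Schwarz turns the energy bound at
  scale \<open>r\<close> into \<open>\<Sum> x\<^sup>2 < 2 N Dh (r/l)^4\<close> for the \<open>N = L/(2r)\<close> integers
  \<open>x = (second difference)/(2l)\<close>. A ball \<open>\<Sum> x\<^sup>2 < N R\<close> in \<open>\<bbbZ>^N\<close> has at most
  \<open>(2 e (1 + sqrt R))^N\<close> points, so the scale \<open>r = 2^i l\<close> contributes a factor \<open>Dh^((3 + i) N)\<close>,
  and \<open>\<Sum>\<^sub>i (3 + i) L / (2^(i+1) l) = O(L/l)\<close>.\<close>

section \<open>Lattice points in a Euclidean ball\<close>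

lemma sum_exp_neg_div_le:
  fixes q :: real
  assumes "q > 0"
  shows "(\<Sum>i\<le>K. exp (- real i / q)) \<le> 1 + q"
proof -
  define r where "r = exp (- 1 / q)"
  have r: "0 < r" "r < 1" using assms by (auto simp: r_def)
  have "(\<Sum>i\<le>K. exp (- real i / q)) = (\<Sum>i<Suc K. r ^ i)"
    unfolding lessThan_Suc_atMost r_def
    by (intro sum.cong refl) (simp add: exp_of_nat_mult[symmetric])
  also have "\<dots> \<le> (\<Sum>i. r ^ i)"
    using r by (intro sum_le_suminf summable_geometric) auto
  also have "\<dots> = 1 / (1 - r)"
    using r by (simp add: suminf_geometric)
  also have "\<dots> \<le> 1 + q"
  proof -
    have "1 + 1 / q \<le> exp (1 / q)" by (rule exp_ge_add_one_self)
    hence "(1 + q) * r \<le> q" using assms by (simp add: r_def exp_minus field_simps)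
    thus ?thesis using r assms by (simp add: field_simps)
  qed
  finally show ?thesis .
qed

lemma sum_exp_neg_abs_div_le:
  fixes q :: real and M :: int
  assumes "q > 0"
  shows "(\<Sum>k\<in>{-M..M}. exp (- \<bar>real_of_int k\<bar> / q)) \<le> 2 * (1 + q)"
proof (cases "M \<ge> 0")
  case True
  let ?f = "\<lambda>k::int. exp (- \<bar>real_of_int k\<bar> / q)"
  have "(\<Sum>k\<in>{-M..M}. ?f k) \<le> (\<Sum>k\<in>{-M..0}. ?f k) + (\<Sum>k\<in>{0..M}. ?f k)"
  proof -
    have "{-M..M} = {-M..0} \<union> {0..M}" using True by auto
    thus ?thesis by (simp add: sum_Un sum_nonneg)
  qed
  also have "(\<Sum>k\<in>{0..M}. ?f k) = (\<Sum>i\<le>nat M. exp (- real i / q))"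
    by (rule sum.reindex_bij_witness[where i=int and j=nat]) (use True in auto)
  also have "(\<Sum>k\<in>{-M..0}. ?f k) = (\<Sum>i\<le>nat M. exp (- real i / q))"
    by (rule sum.reindex_bij_witness[where i="\<lambda>i. - int i" and j="\<lambda>k. nat (- k)"])
      (use True in auto)
  finally show ?thesis using sum_exp_neg_div_le[OF assms, of "nat M"] by simp
qed (use assms in simp)

definition int_ball :: "nat \<Rightarrow> real \<Rightarrow> (nat \<Rightarrow> int) set" where
  "int_ball N R = {e \<in> PiE {..<N} (\<lambda>_. UNIV). (\<Sum>m<N. (real_of_int (e m))\<^sup>2) < R}"

lemma int_ball_subset_box:
  "int_ball N R \<subseteq> PiE {..<N} (\<lambda>_. {-\<lceil>sqrt R\<rceil>..\<lceil>sqrt R\<rceil>})"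
proof
  fix e assume e: "e \<in> int_ball N R"
  have "\<bar>e m\<bar> \<le> \<lceil>sqrt R\<rceil>" if "m < N" for m
  proof -
    have "(real_of_int (e m))\<^sup>2 \<le> (\<Sum>m<N. (real_of_int (e m))\<^sup>2)"
      using that by (intro member_le_sum) auto
    hence "(real_of_int (e m))\<^sup>2 < R" using e by (simp add: int_ball_def)
    hence "\<bar>real_of_int (e m)\<bar> < sqrt R" using real_less_rsqrt by fastforce
    thus ?thesis by linarith
  qed
  thus "e \<in> PiE {..<N} (\<lambda>_. {-\<lceil>sqrt R\<rceil>..\<lceil>sqrt R\<rceil>})"
    using e by (force simp: int_ball_def PiE_iff abs_le_iff)
qed

lemma finite_int_ball: "finite (int_ball N R)"
  by (rule finite_subset[OF int_ball_subset_box]) (simp add: finite_PiE)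

lemma sum_abs_le_of_int_ball:
  assumes "e \<in> int_ball N R"
  shows "(\<Sum>m<N. \<bar>real_of_int (e m)\<bar>) \<le> real N * sqrt (R / N)"
proof -
  have "(\<Sum>m<N. \<bar>real_of_int (e m)\<bar>)\<^sup>2 \<le> (\<Sum>m<N. (real_of_int (e m))\<^sup>2) * real N"
    using sum_squared_le_sum_of_squares[of "\<lambda>m. \<bar>real_of_int (e m)\<bar>" "{..<N}"] by simp
  also have "\<dots> \<le> R * real N"
    using assms by (intro mult_right_mono) (auto simp: int_ball_def)
  finally have "(\<Sum>m<N. \<bar>real_of_int (e m)\<bar>) \<le> sqrt (R * real N)"
    by (rule real_le_rsqrt)
  also have "\<dots> = real N * sqrt (R / N)"
    by (cases "N = 0") (simp_all add: real_sqrt_divide real_sqrt_mult field_simps)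
  finally show ?thesis .
qed

text \<open>Each lattice point of the ball is weighted by \<open>exp (N - \<Sum>|e m| / q) \<ge> 1\<close>; summing the
  weights over a whole box factorises into one geometric series per coordinate.\<close>
lemma card_int_ball_le:
  assumes "N > 0" and "R > 0"
  shows "real (card (int_ball N R)) \<le> (2 * exp 1 * (1 + sqrt (R / N)))^N"
proof -
  define q where "q = sqrt (R / N)"
  define M where "M = \<lceil>sqrt R\<rceil>"
  define Box where "Box = PiE {..<N} (\<lambda>_. {-M..M})"
  define w where "w e = exp (real N) * (\<Prod>m<N. exp (- \<bar>real_of_int (e m)\<bar> / q))"
    for e :: "nat \<Rightarrow> int"
  have q: "q > 0" using assms by (simp add: q_def)
  have w_ge_1: "1 \<le> w e" if "e \<in> int_ball N R" for e
  proof -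
    have "(\<Sum>m<N. \<bar>real_of_int (e m)\<bar>) / q \<le> real N"
      using sum_abs_le_of_int_ball[OF that] q by (simp add: q_def divide_le_eq)
    hence "0 \<le> real N - (\<Sum>m<N. \<bar>real_of_int (e m)\<bar>) / q" by simp
    moreover have "w e = exp (real N - (\<Sum>m<N. \<bar>real_of_int (e m)\<bar>) / q)"
    proof -
      have "(\<Sum>m<N. - \<bar>real_of_int (e m)\<bar> / q) = - (\<Sum>m<N. \<bar>real_of_int (e m)\<bar>) / q"
        by (simp add: sum_negf sum_divide_distrib)
      thus ?thesis
        unfolding w_def exp_sum[OF finite_lessThan, symmetric] by (simp add: exp_add[symmetric])
    qed
    ultimately show ?thesis by simp
  qed
  have "real (card (int_ball N R)) \<le> (\<Sum>e\<in>int_ball N R. w e)"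
    using sum_mono[of "int_ball N R" "\<lambda>_. 1" w] w_ge_1 by simp
  also have "\<dots> \<le> (\<Sum>e\<in>Box. w e)"
    using int_ball_subset_box[of N R]
    by (intro sum_mono2) (auto simp: Box_def M_def w_def finite_PiE prod_nonneg)
  also have "\<dots> = exp (real N) * (\<Prod>m<N. \<Sum>k\<in>{-M..M}. exp (- \<bar>real_of_int k\<bar> / q))"
    unfolding w_def Box_def sum_distrib_left[symmetric] by (subst prod_sum_PiE) auto
  also have "\<dots> \<le> exp (real N) * (2 * (1 + q))^N"
    using sum_exp_neg_abs_div_le[OF q, of M] unfolding prod_constant card_lessThan
    by (intro mult_left_mono power_mono sum_nonneg) auto
  also have "\<dots> = (2 * exp 1 * (1 + q))^N"
    by (simp add: exp_of_nat_mult[symmetric] power_mult_distrib mult_ac)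
  finally show ?thesis by (simp add: q_def)
qed

section \<open>Dyadic decomposition and Dirichlet energy\<close>

lemma interp_at_multiple:
  assumes "0 < r"
  shows "interp r h (a * r) = h (a * r)"
  using assms by (simp add: interp_def)

lemma interp_double_at_odd_multiple:
  assumes "0 < r"
  shows "interp (2 * r) h ((2 * m + 1) * r) = (h (2 * m * r) + h ((2 * m + 2) * r)) / 2"
proof -
  have x: "(2 * m + 1) * r = m * (2 * r) + r" by (simp add: algebra_simps)
  have "((2 * m + 1) * r) div (2 * r) = m" and "((2 * m + 1) * r) mod (2 * r) = r"
    unfolding x using assms by simp_all
  thus ?thesis using assms by (simp add: interp_def algebra_simps field_simps)
qed

definition second_diff :: "nat \<Rightarrow> (nat \<Rightarrow> 'a::ring_1) \<Rightarrow> nat \<Rightarrow> 'a" where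
  "second_diff r f m = 2 * f ((2 * m + 1) * r) - f (2 * m * r) - f ((2 * m + 2) * r)"

lemma hscale_at_even_multiple:
  assumes "0 < r"
  shows "hscale r h (2 * m * r) = 0"
  using interp_at_multiple[OF assms, of h "2 * m"] interp_at_multiple[of "2 * r" h m] assms
  by (simp add: hscale_def hge_def mult_ac)

lemma hscale_at_odd_multiple:
  assumes "0 < r"
  shows "hscale r h ((2 * m + 1) * r) = second_diff r h m / 2"
  using interp_at_multiple[OF assms, of h "2 * m + 1"] interp_double_at_odd_multiple[OF assms]
  by (simp add: hscale_def hge_def second_diff_def field_simps)

lemma sq_diff_div_le_sum_sq_steps:
  fixes g :: "nat \<Rightarrow> real"
  assumes "0 < r"
  shows "(g (a + r) - g a)\<^sup>2 / r \<le> (\<Sum>x = a..<a + r. (g (Suc x) - g x)\<^sup>2)"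
proof -
  have "(g (a + r) - g a)\<^sup>2 = (\<Sum>x = a..<a + r. g (Suc x) - g x)\<^sup>2"
    by (simp add: sum_Suc_diff')
  also have "\<dots> \<le> (\<Sum>x = a..<a + r. (g (Suc x) - g x)\<^sup>2) * r"
    using sum_squared_le_sum_of_squares[of _ "{a..<a + r}"] by simp
  finally show ?thesis using assms by (simp add: divide_le_eq)
qed

lemma sum_sq_coarse_steps_le:
  fixes g :: "nat \<Rightarrow> real"
  assumes "0 < r"
  shows "(\<Sum>a<M. (g (a * r + r) - g (a * r))\<^sup>2 / r) \<le> (\<Sum>x<M * r. (g (Suc x) - g x)\<^sup>2)"
  unfolding sum.nat_group[symmetric] using sq_diff_div_le_sum_sq_steps[OF assms]
  by (intro sum_mono) simp

lemma Dir_eq_sum_lessThan: "Dir L g = (\<Sum>x<L. (g (Suc x) - g x)\<^sup>2) / 2"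
proof -
  have "(\<Sum>x = 1..L. (g x - g (x - 1))\<^sup>2) = (\<Sum>x<L. (g (Suc x) - g x)\<^sup>2)"
    by (rule sum.reindex_bij_witness[where i=Suc and j="\<lambda>x. x - 1"]) auto
  thus ?thesis by (simp add: Dir_def)
qed

lemma Dir_hscale_ge:
  assumes "0 < r" and "L = 2 * N * r"
  shows "(\<Sum>m<N. (second_diff r h m)\<^sup>2) / (4 * r) \<le> Dir L (hscale r h)"
proof -
  let ?g = "hscale r h"
  let ?F = "\<lambda>a. (?g (a * r + r) - ?g (a * r))\<^sup>2 / r"
  have "?F (2 * m) + ?F (2 * m + 1) = (second_diff r h m)\<^sup>2 / (2 * r)" for m
  proof -
    have "2 * m * r + r = (2 * m + 1) * r" and "(2 * m + 1) * r + r = 2 * (m + 1) * r"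
      by (simp_all add: algebra_simps)
    hence "?F (2 * m) + ?F (2 * m + 1) = 2 * (second_diff r h m / 2)\<^sup>2 / r"
      using assms(1) by (simp only: hscale_at_even_multiple hscale_at_odd_multiple) simp
    thus ?thesis by (simp add: power2_eq_square)
  qed
  hence "(\<Sum>a<N * 2. ?F a) = (\<Sum>m<N. (second_diff r h m)\<^sup>2 / (2 * r))"
    unfolding sum.nat_group[symmetric] by (simp add: mult.commute)
  moreover have "(\<Sum>a<N * 2. ?F a) \<le> (\<Sum>x<L. (?g (Suc x) - ?g x)\<^sup>2)"
    using sum_sq_coarse_steps_le[OF assms(1), of ?g "N * 2"] assms(2) by (simp add: mult_ac)
  ultimately show ?thesis
    by (simp add: Dir_eq_sum_lessThan sum_divide_distrib[symmetric])
qed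

section \<open>Counting through successive refinements\<close>

lemma card_image_le_mult_card_image:
  assumes "finite (f ` A)" and "finite (g ` A)"
    and "\<And>a b. a \<in> A \<Longrightarrow> b \<in> A \<Longrightarrow> f a = f b \<Longrightarrow> g a = g b \<Longrightarrow> h a = h b"
  shows "finite (h ` A) \<and> card (h ` A) \<le> card (f ` A) * card (g ` A)"
proof -
  define p where "p a = (f a, g a)" for a
  have "h (inv_into A p (p a)) = h a" if "a \<in> A" for a
  proof -
    have "p a \<in> p ` A" using that by (rule imageI)
    hence inv: "inv_into A p (p a) \<in> A" and "p (inv_into A p (p a)) = p a"
      by (rule inv_into_into, rule f_inv_into_f)
    thus ?thesis by (intro assms(3)[OF inv that]) (simp_all add: p_def)
  qed
  hence h_eq: "h ` A = (\<lambda>q. h (inv_into A p q)) ` p ` A"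
    unfolding image_image by (rule image_cong[OF refl, symmetric])
  have p_sub: "p ` A \<subseteq> f ` A \<times> g ` A" by (auto simp: p_def)
  have fin: "finite (p ` A)" using assms(1,2) by (intro finite_subset[OF p_sub]) simp
  have "card (h ` A) \<le> card (p ` A)" unfolding h_eq using fin by (rule card_image_le)
  also have "\<dots> \<le> card (f ` A) * card (g ` A)"
    using card_mono[OF _ p_sub] assms(1,2) by (simp add: card_cartesian_product)
  finally show ?thesis using fin h_eq by simp
qed

lemma card_image_refinement_le:
  assumes "k \<le> n" and "finite (f n ` A)"
    and "\<And>i. k \<le> i \<Longrightarrow> i < n \<Longrightarrow> finite (g i ` A)"
    and "\<And>i a b. k \<le> i \<Longrightarrow> i < n \<Longrightarrow> a \<in> A \<Longrightarrow> b \<in> A \<Longrightarrow>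
           f (Suc i) a = f (Suc i) b \<Longrightarrow> g i a = g i b \<Longrightarrow> f i a = f i b"
  shows "finite (f k ` A) \<and> card (f k ` A) \<le> card (f n ` A) * (\<Prod>i = k..<n. card (g i ` A))"
  using assms(1)
proof (induction k rule: inc_induct)
  case base
  show ?case using assms(2) by simp
next
  case (step i)
  let ?P = "\<lambda>i. \<Prod>m = i..<n. card (g m ` A)"
  have "finite (f i ` A) \<and> card (f i ` A) \<le> card (f (Suc i) ` A) * card (g i ` A)"
  proof (rule card_image_le_mult_card_image)
    show "finite (f (Suc i) ` A)" using step.IH by simp
    show "finite (g i ` A)" using assms(3) step.hyps by simp
  qed (rule assms(4)[OF step.hyps])
  moreover have "card (f (Suc i) ` A) * card (g i ` A) \<le> card (f n ` A) * ?P (Suc i) * card (g i ` A)"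
    using step.IH by (intro mult_right_mono) auto
  moreover have "card (f n ` A) * ?P (Suc i) * card (g i ` A) = card (f n ` A) * ?P i"
    using prod.atLeast_Suc_lessThan[OF step.hyps(2), of "\<lambda>m. card (g m ` A)"]
    by (simp add: mult_ac)
  ultimately show ?case by simp
qed

section \<open>Level codes of coarse-grained height functions\<close>

definition grid_restr :: "nat \<Rightarrow> nat \<Rightarrow> (nat \<Rightarrow> int) \<Rightarrow> nat \<Rightarrow> int" where
  "grid_restr L r hb x = (if r dvd x \<and> x \<le> L then hb x else 0)"

definition level_code :: "nat \<Rightarrow> nat \<Rightarrow> nat \<Rightarrow> (nat \<Rightarrow> int) \<Rightarrow> nat \<Rightarrow> int" where
  "level_code L l r hb = restrict (\<lambda>m. second_diff r hb m div int (2 * l)) {..<L div (2 * r)}"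

lemma eq_on_grid_if_second_diff_eq:
  fixes f g :: "nat \<Rightarrow> 'a::{idom, ring_char_0}"
  assumes "0 < r" and L: "L = 2 * N * r"
    and coarse: "\<And>y. 2 * r dvd y \<Longrightarrow> y \<le> L \<Longrightarrow> f y = g y"
    and diff: "\<And>m. m < N \<Longrightarrow> second_diff r f m = second_diff r g m"
    and "r dvd x" and "x \<le> L"
  shows "f x = g x"
proof -
  obtain a where x: "x = a * r" using \<open>r dvd x\<close> by (metis dvdE mult.commute)
  show ?thesis
  proof (cases "even a")
    case True
    then obtain b where "a = 2 * b" by (rule evenE)
    hence "2 * r dvd x" using x by simp
    thus ?thesis using coarse \<open>x \<le> L\<close> by simp
  next
    case False
    then obtain m where a: "a = 2 * m + 1" by (auto elim: oddE)
    have "(2 * m + 1) * r \<le> (2 * N) * r" using \<open>x \<le> L\<close> x a L by (simp add: mult_ac)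
    hence "2 * m + 1 \<le> 2 * N" using \<open>0 < r\<close> by (simp only: mult_le_cancel2)
    hence "m < N" by simp
    have "(m + 1) * (2 * r) \<le> N * (2 * r)" using \<open>m < N\<close> by (intro mult_right_mono) auto
    hence "f ((2 * m + 2) * r) = g ((2 * m + 2) * r)"
      using L by (intro coarse) (simp_all add: algebra_simps)
    moreover have "f (2 * m * r) = g (2 * m * r)"
      using \<open>x \<le> L\<close> x a by (intro coarse) simp_all
    ultimately have "2 * f x = 2 * g x"
      using diff[OF \<open>m < N\<close>] x a by (simp add: second_diff_def)
    thus ?thesis by simp
  qed
qed

lemma second_diff_dvd_of_coarse:
  assumes "hb \<in> coarse_fns L l"
  shows "int (2 * l) dvd second_diff r hb m"
  using assms unfolding coarse_fns_def second_diff_def by (intro dvd_diff dvd_mult) auto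

lemma grid_restr_eq_of_level_code_eq:
  assumes "0 < r" and "2 * r dvd L" and hb: "hb \<in> coarse_fns L l" and hb': "hb' \<in> coarse_fns L l"
    and coarse: "grid_restr L (2 * r) hb = grid_restr L (2 * r) hb'"
    and code: "level_code L l r hb = level_code L l r hb'"
  shows "grid_restr L r hb = grid_restr L r hb'"
proof
  fix x
  define N where "N = L div (2 * r)"
  have L: "L = 2 * N * r"
    using dvd_mult_div_cancel[OF \<open>2 * r dvd L\<close>] by (simp add: N_def mult_ac)
  have diff: "second_diff r hb m = second_diff r hb' m" if "m < N" for m
  proof (rule dvd_div_eq_cancel)
    show "second_diff r hb m div int (2 * l) = second_diff r hb' m div int (2 * l)"
      using fun_cong[OF code, of m] that by (simp add: level_code_def N_def)
  qed (use second_diff_dvd_of_coarse[OF hb] second_diff_dvd_of_coarse[OF hb'] in auto)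
  have coarse': "hb y = hb' y" if "2 * r dvd y" "y \<le> L" for y
    using fun_cong[OF coarse, of y] that by (simp add: grid_restr_def)
  show "grid_restr L r hb x = grid_restr L r hb' x"
    using eq_on_grid_if_second_diff_eq[OF \<open>0 < r\<close> L coarse' diff]
    by (simp add: grid_restr_def)
qed

lemma ext_at_grid:
  assumes "0 < l" and "2 * l dvd x"
  shows "ext l hb x = real_of_int (hb x)"
  using assms interp_at_multiple[of "2 * l"] by (auto simp: ext_def elim!: dvdE simp: mult.commute)

lemma second_diff_ext:
  assumes "0 < l" and "2 * l dvd r"
  shows "second_diff r (ext l hb) m = real_of_int (second_diff r hb m)"
  unfolding second_diff_def ext_at_grid[OF assms(1) dvd_mult[OF assms(2)]] by simp

lemma finite_scales: "finite (scales L l)"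
  by (rule finite_subset[of _ "{..L}"]) (auto simp: scales_def)

lemma scale_energy_le_maxq:
  assumes "r \<in> scales L l"
  shows "(real l / real r)\<^sup>2 * Dir L (hscale r (ext l hb)) / real L \<le> maxq L l hb"
  using assms finite_scales by (auto simp: maxq_def intro!: Max_ge)

lemma level_code_in_int_ball:
  assumes hb: "hb \<in> coarse_fns L l" and r: "r \<in> scales L l"
    and "2 * l dvd r" and "2 * r dvd L" and "maxq L l hb < Dh"
  defines "N \<equiv> L div (2 * r)"
  shows "level_code L l r hb \<in> int_ball N (real N * (2 * Dh * (real r / real l) ^ 4))"
proof -
  have "0 < r" using r by (auto simp: scales_def)
  hence "0 < l" using \<open>2 * l dvd r\<close> by (cases "l = 0") auto
  have L: "L = 2 * N * r"
    using dvd_mult_div_cancel[OF \<open>2 * r dvd L\<close>] by (simp add: N_def mult_ac)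
  hence "0 < L" using \<open>0 < r\<close> r by (auto simp: scales_def)
  define S where "S = (\<Sum>m<N. (real_of_int (second_diff r hb m))\<^sup>2)"
  have "S / (4 * r) \<le> Dir L (hscale r (ext l hb))"
    using Dir_hscale_ge[OF \<open>0 < r\<close> L, of "ext l hb"] \<open>0 < l\<close> \<open>2 * l dvd r\<close>
    by (simp add: S_def second_diff_ext)
  hence "(real l / real r)\<^sup>2 * (S / (4 * r)) / real L
      \<le> (real l / real r)\<^sup>2 * Dir L (hscale r (ext l hb)) / real L"
    by (intro divide_right_mono mult_left_mono) simp_all
  also have "\<dots> \<le> maxq L l hb" using r by (rule scale_energy_le_maxq)
  also have "\<dots> < Dh" by fact
  finally have "(real l / real r)\<^sup>2 * (S / (4 * r)) / real L < Dh" .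
  moreover have "0 < N" using \<open>0 < L\<close> L by (cases "N = 0") auto
  ultimately have "S * real l ^ 2 < Dh * (8 * N * real r ^ 4)"
    using \<open>0 < r\<close> L by (simp add: field_simps power2_eq_square power4_eq_xxxx)
  hence S_less: "S / (4 * real l ^ 2) < real N * (2 * Dh * (real r / real l) ^ 4)"
    using \<open>0 < l\<close> by (simp add: field_simps power2_eq_square power4_eq_xxxx)
  have code: "real_of_int (level_code L l r hb m) = real_of_int (second_diff r hb m) / (2 * l)"
    if "m < N" for m
    using that second_diff_dvd_of_coarse[OF hb] \<open>0 < l\<close>
    by (auto simp: level_code_def N_def real_of_int_div)
  have "(\<Sum>m<N. (real_of_int (level_code L l r hb m))\<^sup>2) = S / (4 * real l ^ 2)"
    by (simp add: S_def code power_divide sum_divide_distrib power_mult_distrib)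
  thus ?thesis
    using S_less by (simp add: int_ball_def level_code_def N_def)
qed

section \<open>Counting low-energy height functions\<close>

lemma lattice_ball_factor_le:
  fixes D q :: real
  assumes "8 \<le> D" and "1 \<le> q"
  shows "2 * exp 1 * (1 + sqrt (2 * D * q ^ 4)) \<le> D ^ 3 * q\<^sup>2"
proof -
  have "sqrt (q ^ 4) = q\<^sup>2" by (rule real_sqrt_unique) simp_all
  hence sqrt_eq: "sqrt (2 * D * q ^ 4) = sqrt (2 * D) * q\<^sup>2" by (simp add: real_sqrt_mult)
  have "sqrt (2 * D) \<le> D"
    using assms(1) by (intro real_le_lsqrt) (auto simp: power2_eq_square)
  hence "sqrt (2 * D) * q\<^sup>2 \<le> D * q\<^sup>2" by (rule mult_right_mono) simp
  moreover have "1 \<le> q\<^sup>2" using assms(2) by (rule one_le_power)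
  moreover have "q\<^sup>2 \<le> D * q\<^sup>2" using assms(1) by (simp add: mult_le_cancel_right1)
  ultimately have "1 + sqrt (2 * D * q ^ 4) \<le> 2 * (D * q\<^sup>2)" unfolding sqrt_eq by linarith
  moreover have "0 \<le> 1 + sqrt (2 * D * q ^ 4)" using assms(1) by simp
  moreover have "2 * exp 1 \<le> (6::real)" using exp_le by simp
  ultimately have "2 * exp 1 * (1 + sqrt (2 * D * q ^ 4)) \<le> 6 * (2 * (D * q\<^sup>2))"
    by (intro mult_mono) auto
  also have "\<dots> = 12 * (D * q\<^sup>2)" by simp
  also have "\<dots> \<le> D\<^sup>2 * (D * q\<^sup>2)"
    using assms(1) power_mono[of 8 D 2] by (intro mult_right_mono) auto
  finally show ?thesis by (simp add: power2_eq_square power3_eq_cube mult_ac)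
qed

definition low_energy :: "nat \<Rightarrow> nat \<Rightarrow> real \<Rightarrow> (nat \<Rightarrow> int) set" where
  "low_energy L l Dh = {hb \<in> coarse_fns L l. maxq L l hb < Dh}"

lemma scale_in_scales:
  assumes "L = l * 2 ^ Suc t" and "l = 2 ^ j" and "1 \<le> i" and "i \<le> t"
  shows "l * 2 ^ i \<in> scales L l"
proof -
  have "2 * l \<le> l * 2 ^ i" using assms(2,3) by (simp add: self_le_power mult_le_mono2)
  moreover have "2 * (l * 2 ^ i) \<le> L"
    using assms(1,4) by (simp add: power_increasing)
  moreover have "l * 2 ^ i = 2 ^ (j + i)" using assms(2) by (simp add: power_add)
  ultimately show ?thesis unfolding scales_def by auto
qed

lemma level_codes_subset_int_ball:
  assumes L: "L = l * 2 ^ Suc t" and l: "l = 2 ^ j" and "1 \<le> i" and "i \<le> t"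
  shows "level_code L l (l * 2 ^ i) ` low_energy L l Dh
    \<subseteq> int_ball (2 ^ (t - i)) (2 ^ (t - i) * (2 * Dh * (2 ^ i) ^ 4))"
proof -
  define r where "r = l * 2 ^ i"
  have "2 * r dvd L" using L \<open>i \<le> t\<close> by (simp add: r_def le_imp_power_dvd)
  moreover have "L div (2 * r) = 2 ^ (t - i)" using L \<open>i \<le> t\<close> by (simp add: r_def l power_diff)
  moreover have "real r / real l = 2 ^ i" by (simp add: r_def l)
  ultimately show ?thesis
    using level_code_in_int_ball[of _ L l r] scale_in_scales[OF L l \<open>1 \<le> i\<close> \<open>i \<le> t\<close>] \<open>1 \<le> i\<close>
    by (auto simp: low_energy_def r_def dvd_power)
qed

lemma card_level_codes_le:
  assumes L: "L = l * 2 ^ Suc t" and l: "l = 2 ^ j" and "1 \<le> i" and "i \<le> t" and "8 \<le> Dh"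
  shows "real (card (level_code L l (l * 2 ^ i) ` low_energy L l Dh)) \<le> Dh ^ (2 ^ (t - i) * (3 + i))"
proof -
  let ?N = "2 ^ (t - i) :: nat"
  have "real (card (level_code L l (l * 2 ^ i) ` low_energy L l Dh))
      \<le> real (card (int_ball ?N (?N * (2 * Dh * (2 ^ i) ^ 4))))"
    using card_mono[OF finite_int_ball level_codes_subset_int_ball[OF assms(1-4)]] by simp
  also have "\<dots> \<le> (2 * exp 1 * (1 + sqrt (2 * Dh * (2 ^ i) ^ 4))) ^ ?N"
    using card_int_ball_le[of ?N "?N * (2 * Dh * (2 ^ i) ^ 4)"] \<open>8 \<le> Dh\<close> by simp
  also have "\<dots> \<le> (Dh ^ 3 * ((2::real) ^ i)\<^sup>2) ^ ?N"
    using lattice_ball_factor_le[OF \<open>8 \<le> Dh\<close>, of "2 ^ i"] \<open>8 \<le> Dh\<close>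
    by (intro power_mono) (auto intro!: mult_nonneg_nonneg add_nonneg_nonneg)
  also have "\<dots> \<le> (Dh ^ 3 * Dh ^ i) ^ ?N"
  proof -
    have "((2::real) ^ i)\<^sup>2 = 4 ^ i" by (simp add: power2_eq_square power_mult_distrib[symmetric])
    also have "\<dots> \<le> Dh ^ i" using \<open>8 \<le> Dh\<close> by (intro power_mono) auto
    finally show ?thesis using \<open>8 \<le> Dh\<close> by (intro power_mono mult_left_mono) auto
  qed
  finally show ?thesis by (simp add: power_add power_mult mult.commute)
qed

lemma grid_restr_coarsest:
  assumes "hb \<in> coarse_fns L l"
  shows "grid_restr L L hb = (\<lambda>_. 0)"
proof
  fix x
  have "x = 0 \<or> x = L" if "L dvd x" "x \<le> L"
    using that dvd_imp_le[of L x] by force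
  thus "grid_restr L L hb x = 0"
    using assms by (auto simp: grid_restr_def coarse_fns_def)
qed

lemma grid_restr_finest:
  assumes "hb \<in> coarse_fns L l"
  shows "grid_restr L (2 * l) hb = hb"
  using assms by (auto simp: grid_restr_def coarse_fns_def)

lemma card_low_energy_le_prod_card_level_codes:
  assumes L: "L = l * 2 ^ Suc t" and l: "l = 2 ^ j"
  shows "finite (low_energy L l Dh)"
    and "card (low_energy L l Dh) \<le> (\<Prod>i = 1..t. card (level_code L l (l * 2 ^ i) ` low_energy L l Dh))"
proof -
  let ?A = "low_energy L l Dh"
  let ?f = "\<lambda>i. grid_restr L (l * 2 ^ i)" and ?g = "\<lambda>i. level_code L l (l * 2 ^ i)"
  have coarsest: "?f (Suc t) ` ?A \<subseteq> {\<lambda>_. 0}"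
    using grid_restr_coarsest by (auto simp: low_energy_def L)
  have "finite (?f 1 ` ?A) \<and>
      card (?f 1 ` ?A) \<le> card (?f (Suc t) ` ?A) * (\<Prod>i = 1..<Suc t. card (?g i ` ?A))"
  proof (rule card_image_refinement_le)
    show "finite (?f (Suc t) ` ?A)" using finite_subset[OF coarsest] by simp
    show "finite (?g i ` ?A)" if "1 \<le> i" "i < Suc t" for i
      using finite_subset[OF level_codes_subset_int_ball[OF L l] finite_int_ball] that by simp
    show "?f i a = ?f i b"
      if "1 \<le> i" "i < Suc t" "a \<in> ?A" "b \<in> ?A" "?f (Suc i) a = ?f (Suc i) b" "?g i a = ?g i b"
      for i a b
    proof (rule grid_restr_eq_of_level_code_eq)
      show "2 * (l * 2 ^ i) dvd L" using L that(2) by (simp add: le_imp_power_dvd)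
      show "grid_restr L (2 * (l * 2 ^ i)) a = grid_restr L (2 * (l * 2 ^ i)) b"
        using that(5) by (simp add: mult_ac)
    qed (use that in \<open>auto simp: l low_energy_def\<close>)
  qed simp
  moreover have "?f 1 ` ?A = ?A"
  proof -
    have "?f 1 ` ?A = (\<lambda>hb. hb) ` ?A"
      using grid_restr_finest by (intro image_cong) (auto simp: low_energy_def mult.commute)
    thus ?thesis by simp
  qed
  ultimately have fin: "finite ?A"
    and card_le: "card ?A \<le> card (?f (Suc t) ` ?A) * (\<Prod>i = 1..t. card (?g i ` ?A))"
    by (simp_all add: atLeastLessThanSuc_atLeastAtMost)
  show "finite ?A" by (rule fin)
  have "card (?f (Suc t) ` ?A) * (\<Prod>i = 1..t. card (?g i ` ?A))
      \<le> 1 * (\<Prod>i = 1..t. card (?g i ` ?A))"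
    using card_mono[OF _ coarsest] by (intro mult_right_mono) simp_all
  thus "card ?A \<le> (\<Prod>i = 1..t. card (?g i ` ?A))" using card_le by linarith
qed

lemma sum_weights_eq: "(\<Sum>i = 1..t. 2 ^ (t - i) * (3 + i)) + t + 5 = (5::nat) * 2 ^ t"
proof (induction t)
  case 0
  show ?case by simp
next
  case (Suc t)
  have "(\<Sum>i = 1..t. 2 ^ (Suc t - i) * (3 + i)) = 2 * (\<Sum>i = 1..t. 2 ^ (t - i) * (3 + i))"
    by (simp add: sum_distrib_left Suc_diff_le mult.assoc)
  thus ?case using Suc.IH by simp
qed

lemma card_low_energy_le:
  assumes L: "L = l * 2 ^ Suc t" and l: "l = 2 ^ j" and "8 \<le> Dh"
  shows "real (card (low_energy L l Dh)) \<le> Dh ^ (5 * 2 ^ t)"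
proof -
  have "real (card (low_energy L l Dh))
      \<le> (\<Prod>i = 1..t. real (card (level_code L l (l * 2 ^ i) ` low_energy L l Dh)))"
    using card_low_energy_le_prod_card_level_codes(2)[OF L l] by (simp flip: of_nat_prod)
  also have "\<dots> \<le> (\<Prod>i = 1..t. Dh ^ (2 ^ (t - i) * (3 + i)))"
    using card_level_codes_le[OF L l _ _ \<open>8 \<le> Dh\<close>] by (intro prod_mono) auto
  also have "\<dots> = Dh ^ (\<Sum>i = 1..t. 2 ^ (t - i) * (3 + i))"
    by (rule power_sum[symmetric])
  also have "\<dots> \<le> Dh ^ (5 * 2 ^ t)"
    using sum_weights_eq[of t] \<open>8 \<le> Dh\<close> by (intro power_increasing) simp_all
  finally show ?thesis .
qed

lemma ln_le_of_le_power:
  fixes x b :: real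
  assumes "0 \<le> x" and "x \<le> b ^ k" and "1 \<le> b"
  shows "ln x \<le> k * ln b"
proof (cases "x = 0")
  case False
  hence "ln x \<le> ln (b ^ k)" using assms by (intro ln_mono) auto
  thus ?thesis using assms(3) by (simp add: ln_realpow)
qed (use assms(3) in simp)

theorem lemma8:
  shows "\<exists>C::real. \<forall>(L::nat) (l::nat) (Dh::real).
    (\<exists>n. L = 2 ^ n) \<and> 2 \<le> L \<and> (\<exists>j. l = 2 ^ j) \<and> 2 * l \<le> L \<and> C \<le> Dh \<longrightarrow>
      finite {hb \<in> coarse_fns L l. maxq L l hb < Dh} \<and>
      ln (real (card {hb \<in> coarse_fns L l. maxq L l hb < Dh}))
        \<le> C * (real L / real l) * ln Dh"
proof (rule exI[of _ 8], intro allI impI, elim conjE exE)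
  fix L l :: nat and Dh :: real and n j
  assume L: "L = 2 ^ n" and l: "l = 2 ^ j" and "2 * l \<le> L" and "8 \<le> Dh"
  have "(2::nat) ^ Suc j \<le> 2 ^ n" using \<open>2 * l \<le> L\<close> by (simp add: L l)
  hence "Suc j \<le> n" by (rule power_le_imp_le_exp[rotated]) simp
  then obtain t where "n = j + Suc t" using less_iff_Suc_add[of j n] by auto
  hence L': "L = l * 2 ^ Suc t" by (simp add: L l power_add)
  have "ln (real (card (low_energy L l Dh))) \<le> real (5 * 2 ^ t) * ln Dh"
    using card_low_energy_le[OF L' l \<open>8 \<le> Dh\<close>] \<open>8 \<le> Dh\<close> by (intro ln_le_of_le_power) auto
  also have "\<dots> = 5 / 2 * (real L / real l) * ln Dh" by (simp add: L' l)
  also have "\<dots> \<le> 8 * (real L / real l) * ln Dh" using \<open>8 \<le> Dh\<close> by (intro mult_right_mono) auto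
  finally show "finite {hb \<in> coarse_fns L l. maxq L l hb < Dh} \<and>
      ln (real (card {hb \<in> coarse_fns L l. maxq L l hb < Dh})) \<le> 8 * (real L / real l) * ln Dh"
    using card_low_energy_le_prod_card_level_codes(1)[OF L' l] by (simp add: low_energy_def)
qed

end
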